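(* Let $(R,+,\cdot)$ be a finite simple semiring with $|RR|>1$ and $|R|>2$, and let $(M,+)$ be an $R$-semimodule that is faithful of smallest cardinality. Then $(M,+)$ is irreducible.
   Context: A semiring is a nonempty set with a commutative semigroup operation $+$ and a semigroup operation $\cdot$ satisfying both distributive laws; simple if its only congruences are the identity and the full relation. $RR=\{rs: r,s\in R\}$. An $R$-semimodule is a commutative semigroup $(M,+)$ with an action $R\times M\to M$ satisfying $r(sx)=(rs)x$, $(r+s)x=rx+sx$, $r(x+y)=rx+ry$. It is faithful if the map $r\mapsto(x\mapsto rx)$ from $R$ to the endomorphisms of $(M,+)$ is injective; faithful of smallest cardinality if it is faithful and no $R$-semimodule $N$ with $|N|<|M|$ is faithful. A subsemimodule is a subsemigroup closed under the action; a semimodule congruence is an equivalence compatible with $+$ and the action. $M$ is quasitrivial if $rx=sx$ for all $r,s\in R$, $x\in M$; id-quasitrivial if $rx=x$ for all $r,x$. $M$ is sub-irreducible if it is not quasitrivial and all its proper subsemimodules are id-quasitrivial; quotient-irreducible if not quasitrivial and its only congruences are the identity and $M\times M$; irreducible if both. *)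

theory Defs
  imports Main
begin

definition semiring :: "'a set \<Rightarrow> ('a \<Rightarrow> 'a \<Rightarrow> 'a) \<Rightarrow> ('a \<Rightarrow> 'a \<Rightarrow> 'a) \<Rightarrow> bool" where
  "semiring R add mul \<longleftrightarrow> R \<noteq> {} \<and>
     (\<forall>a\<in>R. \<forall>b\<in>R. add a b \<in> R \<and> mul a b \<in> R) \<and>
     (\<forall>a\<in>R. \<forall>b\<in>R. \<forall>c\<in>R. add (add a b) c = add a (add b c)) \<and>
     (\<forall>a\<in>R. \<forall>b\<in>R. add a b = add b a) \<and>
     (\<forall>a\<in>R. \<forall>b\<in>R. \<forall>c\<in>R. mul (mul a b) c = mul a (mul b c)) \<and>
     (\<forall>a\<in>R. \<forall>b\<in>R. \<forall>c\<in>R. mul a (add b c) = add (mul a b) (mul a c)) \<and>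
     (\<forall>a\<in>R. \<forall>b\<in>R. \<forall>c\<in>R. mul (add a b) c = add (mul a c) (mul b c))"

definition semiring_congruence :: "'a set \<Rightarrow> ('a \<Rightarrow> 'a \<Rightarrow> 'a) \<Rightarrow> ('a \<Rightarrow> 'a \<Rightarrow> 'a) \<Rightarrow> 'a rel \<Rightarrow> bool" where
  "semiring_congruence R add mul E \<longleftrightarrow> equiv R E \<and>
     (\<forall>a b c d. (a, b) \<in> E \<longrightarrow> (c, d) \<in> E \<longrightarrow>
        (add a c, add b d) \<in> E \<and> (mul a c, mul b d) \<in> E)"

definition simple_semiring :: "'a set \<Rightarrow> ('a \<Rightarrow> 'a \<Rightarrow> 'a) \<Rightarrow> ('a \<Rightarrow> 'a \<Rightarrow> 'a) \<Rightarrow> bool" where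
  "simple_semiring R add mul \<longleftrightarrow> semiring R add mul \<and>
     (\<forall>E. semiring_congruence R add mul E \<longrightarrow> E = Id_on R \<or> E = R \<times> R)"

definition prods :: "'a set \<Rightarrow> ('a \<Rightarrow> 'a \<Rightarrow> 'a) \<Rightarrow> 'a set" where
  "prods R mul = {mul r s | r s. r \<in> R \<and> s \<in> R}"

definition semimodule ::
  "'a set \<Rightarrow> ('a \<Rightarrow> 'a \<Rightarrow> 'a) \<Rightarrow> ('a \<Rightarrow> 'a \<Rightarrow> 'a) \<Rightarrow> 'm set \<Rightarrow> ('m \<Rightarrow> 'm \<Rightarrow> 'm) \<Rightarrow> ('a \<Rightarrow> 'm \<Rightarrow> 'm) \<Rightarrow> bool" where
  "semimodule R add mul M pl act \<longleftrightarrow> M \<noteq> {} \<and>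
     (\<forall>x\<in>M. \<forall>y\<in>M. pl x y \<in> M) \<and>
     (\<forall>x\<in>M. \<forall>y\<in>M. \<forall>z\<in>M. pl (pl x y) z = pl x (pl y z)) \<and>
     (\<forall>x\<in>M. \<forall>y\<in>M. pl x y = pl y x) \<and>
     (\<forall>r\<in>R. \<forall>x\<in>M. act r x \<in> M) \<and>
     (\<forall>r\<in>R. \<forall>s\<in>R. \<forall>x\<in>M. act r (act s x) = act (mul r s) x) \<and>
     (\<forall>r\<in>R. \<forall>s\<in>R. \<forall>x\<in>M. act (add r s) x = pl (act r x) (act s x)) \<and>
     (\<forall>r\<in>R. \<forall>x\<in>M. \<forall>y\<in>M. act r (pl x y) = pl (act r x) (act r y))"

definition faithful :: "'a set \<Rightarrow> 'm set \<Rightarrow> ('a \<Rightarrow> 'm \<Rightarrow> 'm) \<Rightarrow> bool" where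
  "faithful R M act \<longleftrightarrow> (\<forall>r\<in>R. \<forall>s\<in>R. (\<forall>x\<in>M. act r x = act s x) \<longrightarrow> r = s)"

definition card_less :: "'m set \<Rightarrow> 'n set \<Rightarrow> bool" where
  "card_less N M \<longleftrightarrow> \<not> (\<exists>f. inj_on f M \<and> f ` M \<subseteq> N)"

text \<open>Competitors are taken with carriers in the
  type of M; any semimodule of strictly smaller cardinality than M is isomorphic to one
  of these, so this is no restriction.\<close>
definition faithful_smallest ::
  "'a set \<Rightarrow> ('a \<Rightarrow> 'a \<Rightarrow> 'a) \<Rightarrow> ('a \<Rightarrow> 'a \<Rightarrow> 'a) \<Rightarrow> 'm set \<Rightarrow> ('m \<Rightarrow> 'm \<Rightarrow> 'm) \<Rightarrow> ('a \<Rightarrow> 'm \<Rightarrow> 'm) \<Rightarrow> bool" where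
  "faithful_smallest R add mul M pl act \<longleftrightarrow>
     semimodule R add mul M pl act \<and> faithful R M act \<and>
     (\<forall>(N::'m set) plN actN. semimodule R add mul N plN actN \<and> faithful R N actN
        \<longrightarrow> \<not> card_less N M)"

definition quasitrivial :: "'a set \<Rightarrow> 'm set \<Rightarrow> ('a \<Rightarrow> 'm \<Rightarrow> 'm) \<Rightarrow> bool" where
  "quasitrivial R M act \<longleftrightarrow> (\<forall>r\<in>R. \<forall>s\<in>R. \<forall>x\<in>M. act r x = act s x)"

definition id_quasitrivial :: "'a set \<Rightarrow> 'm set \<Rightarrow> ('a \<Rightarrow> 'm \<Rightarrow> 'm) \<Rightarrow> bool" where
  "id_quasitrivial R M act \<longleftrightarrow> (\<forall>r\<in>R. \<forall>x\<in>M. act r x = x)"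

definition subsemimodule :: "'a set \<Rightarrow> 'm set \<Rightarrow> ('m \<Rightarrow> 'm \<Rightarrow> 'm) \<Rightarrow> ('a \<Rightarrow> 'm \<Rightarrow> 'm) \<Rightarrow> 'm set \<Rightarrow> bool" where
  "subsemimodule R M pl act S \<longleftrightarrow> S \<subseteq> M \<and>
     (\<forall>x\<in>S. \<forall>y\<in>S. pl x y \<in> S) \<and> (\<forall>r\<in>R. \<forall>x\<in>S. act r x \<in> S)"

definition semimodule_congruence :: "'a set \<Rightarrow> 'm set \<Rightarrow> ('m \<Rightarrow> 'm \<Rightarrow> 'm) \<Rightarrow> ('a \<Rightarrow> 'm \<Rightarrow> 'm) \<Rightarrow> 'm rel \<Rightarrow> bool" where
  "semimodule_congruence R M pl act E \<longleftrightarrow> equiv M E \<and>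
     (\<forall>x y u v. (x, y) \<in> E \<longrightarrow> (u, v) \<in> E \<longrightarrow> (pl x u, pl y v) \<in> E) \<and>
     (\<forall>r\<in>R. \<forall>x y. (x, y) \<in> E \<longrightarrow> (act r x, act r y) \<in> E)"

definition sub_irreducible :: "'a set \<Rightarrow> 'm set \<Rightarrow> ('m \<Rightarrow> 'm \<Rightarrow> 'm) \<Rightarrow> ('a \<Rightarrow> 'm \<Rightarrow> 'm) \<Rightarrow> bool" where
  "sub_irreducible R M pl act \<longleftrightarrow> \<not> quasitrivial R M act \<and>
     (\<forall>S. subsemimodule R M pl act S \<and> S \<noteq> M \<longrightarrow> id_quasitrivial R S act)"

definition quotient_irreducible :: "'a set \<Rightarrow> 'm set \<Rightarrow> ('m \<Rightarrow> 'm \<Rightarrow> 'm) \<Rightarrow> ('a \<Rightarrow> 'm \<Rightarrow> 'm) \<Rightarrow> bool" where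
  "quotient_irreducible R M pl act \<longleftrightarrow> \<not> quasitrivial R M act \<and>
     (\<forall>E. semimodule_congruence R M pl act E \<longrightarrow> E = Id_on M \<or> E = M \<times> M)"

definition irreducible_semimodule :: "'a set \<Rightarrow> 'm set \<Rightarrow> ('m \<Rightarrow> 'm \<Rightarrow> 'm) \<Rightarrow> ('a \<Rightarrow> 'm \<Rightarrow> 'm) \<Rightarrow> bool" where
  "irreducible_semimodule R M pl act \<longleftrightarrow>
     sub_irreducible R M pl act \<and> quotient_irreducible R M pl act"

end

theory Submission
  imports Defs
begin

text \<open>A congruence \<open>E\<close> of \<open>M\<close> induces the semiring congruence
  \<open>r ~ s \<longleftrightarrow> (\<forall>x. (rx, sx) \<in> E)\<close>, which by simplicity is the identity or full.
  If it is the identity, the quotient \<open>M/E\<close> is faithful, so minimality of \<open>|M|\<close> forces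
  \<open>E\<close> to be trivial; the same argument applied to \<open>Id_on S\<close> shows that a proper
  subsemimodule \<open>S\<close> cannot be faithful. If it is full, all of \<open>R\<close> acts alike modulo \<open>E\<close>.
  The hypotheses \<open>|RR| > 1\<close> and \<open>|R| > 2\<close> rule out simple semirings whose multiplication
  ignores one factor, and together with minimality this forces \<open>R\<close> to act as the identity
  on every proper subsemimodule and on every class of a nontrivial congruence.\<close>

section \<open>Semirings and semimodules on carrier sets\<close>

lemma
  assumes "semiring R add mul"
  shows semiring_nonempty: "R \<noteq> {}"
    and semiring_add_closed: "a \<in> R \<Longrightarrow> b \<in> R \<Longrightarrow> add a b \<in> R"
    and semiring_mul_closed: "a \<in> R \<Longrightarrow> b \<in> R \<Longrightarrow> mul a b \<in> R"
    and semiring_add_assoc: "a \<in> R \<Longrightarrow> b \<in> R \<Longrightarrow> c \<in> R \<Longrightarrow> add (add a b) c = add a (add b c)"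
    and semiring_add_comm: "a \<in> R \<Longrightarrow> b \<in> R \<Longrightarrow> add a b = add b a"
    and semiring_mul_assoc: "a \<in> R \<Longrightarrow> b \<in> R \<Longrightarrow> c \<in> R \<Longrightarrow> mul (mul a b) c = mul a (mul b c)"
    and semiring_distrib_left: "a \<in> R \<Longrightarrow> b \<in> R \<Longrightarrow> c \<in> R \<Longrightarrow> mul a (add b c) = add (mul a b) (mul a c)"
    and semiring_distrib_right: "a \<in> R \<Longrightarrow> b \<in> R \<Longrightarrow> c \<in> R \<Longrightarrow> mul (add a b) c = add (mul a c) (mul b c)"
  using assms unfolding semiring_def by blast+

lemmas semiring_rules = semiring_nonempty semiring_add_closed semiring_mul_closed semiring_add_assoc
  semiring_mul_assoc semiring_distrib_left semiring_distrib_right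

lemma
  assumes "semimodule R add mul M pl act"
  shows semimodule_nonempty: "M \<noteq> {}"
    and semimodule_pl_closed: "x \<in> M \<Longrightarrow> y \<in> M \<Longrightarrow> pl x y \<in> M"
    and semimodule_pl_assoc: "x \<in> M \<Longrightarrow> y \<in> M \<Longrightarrow> z \<in> M \<Longrightarrow> pl (pl x y) z = pl x (pl y z)"
    and semimodule_pl_comm: "x \<in> M \<Longrightarrow> y \<in> M \<Longrightarrow> pl x y = pl y x"
    and semimodule_act_closed: "r \<in> R \<Longrightarrow> x \<in> M \<Longrightarrow> act r x \<in> M"
    and semimodule_act_mul: "r \<in> R \<Longrightarrow> s \<in> R \<Longrightarrow> x \<in> M \<Longrightarrow> act r (act s x) = act (mul r s) x"
    and semimodule_act_add: "r \<in> R \<Longrightarrow> s \<in> R \<Longrightarrow> x \<in> M \<Longrightarrow> act (add r s) x = pl (act r x) (act s x)"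
    and semimodule_act_pl: "r \<in> R \<Longrightarrow> x \<in> M \<Longrightarrow> y \<in> M \<Longrightarrow> act r (pl x y) = pl (act r x) (act r y)"
  using assms unfolding semimodule_def by blast+

lemma
  assumes "semimodule_congruence R M pl act E"
  shows semimodule_congruence_refl: "x \<in> M \<Longrightarrow> (x, x) \<in> E"
    and semimodule_congruence_carrier: "(x, y) \<in> E \<Longrightarrow> x \<in> M \<and> y \<in> M"
    and semimodule_congruence_sym: "(x, y) \<in> E \<Longrightarrow> (y, x) \<in> E"
    and semimodule_congruence_trans: "(x, y) \<in> E \<Longrightarrow> (y, z) \<in> E \<Longrightarrow> (x, z) \<in> E"
    and semimodule_congruence_pl: "(x, y) \<in> E \<Longrightarrow> (u, v) \<in> E \<Longrightarrow> (pl x u, pl y v) \<in> E"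
    and semimodule_congruence_act: "r \<in> R \<Longrightarrow> (x, y) \<in> E \<Longrightarrow> (act r x, act r y) \<in> E"
proof -
  have "equiv M E" using assms unfolding semimodule_congruence_def by blast
  then show "x \<in> M \<Longrightarrow> (x, x) \<in> E" "(x, y) \<in> E \<Longrightarrow> x \<in> M \<and> y \<in> M"
    "(x, y) \<in> E \<Longrightarrow> (y, x) \<in> E" "(x, y) \<in> E \<Longrightarrow> (y, z) \<in> E \<Longrightarrow> (x, z) \<in> E"
    unfolding equiv_def refl_on_def sym_def trans_def by blast+
  show "(x, y) \<in> E \<Longrightarrow> (u, v) \<in> E \<Longrightarrow> (pl x u, pl y v) \<in> E"
    "r \<in> R \<Longrightarrow> (x, y) \<in> E \<Longrightarrow> (act r x, act r y) \<in> E"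
    using assms unfolding semimodule_congruence_def by blast+
qed

definition annihilator :: "'a set \<Rightarrow> 'm set \<Rightarrow> ('a \<Rightarrow> 'm \<Rightarrow> 'm) \<Rightarrow> 'm rel \<Rightarrow> 'a rel" where
  "annihilator R M act E = {(r, s). r \<in> R \<and> s \<in> R \<and> (\<forall>x\<in>M. (act r x, act s x) \<in> E)}"

lemma semiring_congruence_annihilator:
  assumes R: "semiring R add mul" and M: "semimodule R add mul M pl act"
    and E: "semimodule_congruence R M pl act E"
  shows "semiring_congruence R add mul (annihilator R M act E)"
proof -
  note E_pl = semimodule_congruence_pl[OF E] and E_act = semimodule_congruence_act[OF E]
  have "equiv M E" using E unfolding semimodule_congruence_def by blast
  then have "equiv R (annihilator R M act E)"
    using semimodule_act_closed[OF M]
    unfolding equiv_def refl_on_def sym_def trans_def annihilator_def by blast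
  moreover have "(add a c, add b d) \<in> annihilator R M act E \<and> (mul a c, mul b d) \<in> annihilator R M act E"
    if ab: "(a, b) \<in> annihilator R M act E" and cd: "(c, d) \<in> annihilator R M act E" for a b c d
  proof -
    have in_R: "a \<in> R" "b \<in> R" "c \<in> R" "d \<in> R"
      and ab_E: "\<And>x. x \<in> M \<Longrightarrow> (act a x, act b x) \<in> E"
      and cd_E: "\<And>x. x \<in> M \<Longrightarrow> (act c x, act d x) \<in> E"
      using ab cd unfolding annihilator_def by auto
    have "(act (add a c) x, act (add b d) x) \<in> E" if "x \<in> M" for x
      using semimodule_act_add[OF M] in_R that ab_E cd_E E_pl by metis
    moreover have "(act (mul a c) x, act (mul b d) x) \<in> E" if x: "x \<in> M" for x
    proof -
      have "(act a (act c x), act a (act d x)) \<in> E" using E_act in_R cd_E x by blast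
      moreover have "(act a (act d x), act b (act d x)) \<in> E"
        using ab_E semimodule_act_closed[OF M] in_R x by blast
      ultimately have "(act a (act c x), act b (act d x)) \<in> E"
        by (rule semimodule_congruence_trans[OF E])
      then show ?thesis using semimodule_act_mul[OF M] in_R x by simp
    qed
    ultimately show ?thesis
      unfolding annihilator_def using in_R semiring_add_closed[OF R] semiring_mul_closed[OF R] by auto
  qed
  ultimately show ?thesis unfolding semiring_congruence_def by blast
qed

lemma faithful_iff_annihilator_Id_on:
  assumes "\<And>r x. r \<in> R \<Longrightarrow> x \<in> M \<Longrightarrow> act r x \<in> M"
  shows "faithful R M act \<longleftrightarrow> annihilator R M act (Id_on M) = Id_on R"
proof
  assume "faithful R M act"
  then show "annihilator R M act (Id_on M) = Id_on R"
    using assms unfolding faithful_def annihilator_def by (auto simp: Id_on_def)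
next
  assume ann: "annihilator R M act (Id_on M) = Id_on R"
  show "faithful R M act"
    unfolding faithful_def
  proof (intro ballI impI)
    fix r s assume "r \<in> R" "s \<in> R" "\<forall>x\<in>M. act r x = act s x"
    then have "(r, s) \<in> annihilator R M act (Id_on M)"
      using assms unfolding annihilator_def by auto
    then show "r = s" using ann by auto
  qed
qed

lemma semimodule_regular:
  assumes "semiring R add mul"
  shows "semimodule R add mul R add mul"
  unfolding semimodule_def
  by (intro conjI ballI) (simp_all add: semiring_rules[OF assms], simp add: semiring_add_comm[OF assms])

lemma semimodule_subsemimodule:
  assumes "semimodule R add mul M pl act" "subsemimodule R M pl act S" "S \<noteq> {}"
  shows "semimodule R add mul S pl act"
proof -
  have SM: "S \<subseteq> M" and "\<And>x y. x \<in> S \<Longrightarrow> y \<in> S \<Longrightarrow> pl x y \<in> S"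
    and "\<And>r x. r \<in> R \<Longrightarrow> x \<in> S \<Longrightarrow> act r x \<in> S"
    using assms(2) unfolding subsemimodule_def by blast+
  with assms(3) show ?thesis
    unfolding semimodule_def
    by (intro conjI ballI) (simp_all add: subsetD[OF SM] semimodule_pl_assoc[OF assms(1)]
        semimodule_act_mul[OF assms(1)] semimodule_act_add[OF assms(1)] semimodule_act_pl[OF assms(1)],
        simp add: subsetD[OF SM] semimodule_pl_comm[OF assms(1)])
qed

lemma semimodule_congruence_Id_on:
  assumes "semimodule R add mul M pl act"
  shows "semimodule_congruence R M pl act (Id_on M)"
  using assms unfolding semimodule_def semimodule_congruence_def equiv_def refl_on_def sym_def trans_def
  by auto

lemma faithful_transfer:
  assumes R: "semiring R add mul" and faithful: "faithful R R mul" and g: "bij_betw g R A"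
  shows "faithful R A (\<lambda>r u. g (mul r (inv_into R g u)))"
  unfolding faithful_def
proof (intro ballI impI)
  fix r s assume rs: "r \<in> R" "s \<in> R" and eq: "\<forall>u\<in>A. g (mul r (inv_into R g u)) = g (mul s (inv_into R g u))"
  have "mul r t = mul s t" if "t \<in> R" for t
  proof -
    have "g (mul r t) = g (mul s t)"
      using eq g that by (auto simp: bij_betw_def)
    then show ?thesis
      using g rs that semiring_mul_closed[OF R] by (auto simp: bij_betw_def inj_on_def)
  qed
  then show "r = s" using faithful rs unfolding faithful_def by blast
qed

lemma semimodule_transfer:
  assumes R: "semiring R add mul" and g: "bij_betw g R A"
  shows "semimodule R add mul A (\<lambda>u v. g (add (inv_into R g u) (inv_into R g v)))
           (\<lambda>r u. g (mul r (inv_into R g u)))"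
proof -
  have "A \<noteq> {}" using g semiring_nonempty[OF R] by (auto simp: bij_betw_def)
  moreover have "inv_into R g u \<in> R" "g (inv_into R g u) = u" if "u \<in> A" for u
    using g that by (auto simp: bij_betw_def inv_into_into f_inv_into_f)
  moreover have "inv_into R g (g a) = a" "g a \<in> A" if "a \<in> R" for a
    using g that by (auto simp: bij_betw_def)
  ultimately show ?thesis
    unfolding semimodule_def
    by (intro conjI ballI) (simp_all add: semiring_rules[OF R], simp add: semiring_add_comm[OF R])
qed

text \<open>The quotient by a congruence, realised on a set of class representatives inside \<open>M\<close>.\<close>
lemma semimodule_quotient_representatives:
  assumes R: "semiring R add mul" and M: "semimodule R add mul M pl act"
    and E: "semimodule_congruence R M pl act E"
  obtains q where "\<And>x. x \<in> M \<Longrightarrow> q x \<in> M" and "\<And>x. x \<in> M \<Longrightarrow> (x, q x) \<in> E"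
    and "\<And>x y. x \<in> M \<Longrightarrow> y \<in> M \<Longrightarrow> q x = q y \<longleftrightarrow> (x, y) \<in> E"
    and "semimodule R add mul (q ` M) (\<lambda>u v. q (pl u v)) (\<lambda>r u. q (act r u))"
proof
  note E_refl = semimodule_congruence_refl[OF E] and E_sym = semimodule_congruence_sym[OF E]
    and E_trans = semimodule_congruence_trans[OF E]
  define q where "q x = (SOME y. (x, y) \<in> E)" for x
  show E_q: "(x, q x) \<in> E" if "x \<in> M" for x
    unfolding q_def by (rule someI[of _ x]) (rule E_refl[OF that])
  then show q_M: "q x \<in> M" if "x \<in> M" for x
    using semimodule_congruence_carrier[OF E] that by blast
  show q_eq_iff: "q x = q y \<longleftrightarrow> (x, y) \<in> E" if "x \<in> M" "y \<in> M" for x y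
  proof
    assume "q x = q y"
    then show "(x, y) \<in> E" using E_q[OF that(1)] E_q[OF that(2)] E_sym E_trans by metis
  next
    assume "(x, y) \<in> E"
    then have "{z. (x, z) \<in> E} = {z. (y, z) \<in> E}" using E_sym E_trans by blast
    then show "q x = q y" unfolding q_def by (metis mem_Collect_eq)
  qed
  have q_pl: "q (pl (q x) (q y)) = q (pl x y)" if "x \<in> M" "y \<in> M" for x y
    using semimodule_congruence_pl[OF E E_sym[OF E_q[OF that(1)]] E_sym[OF E_q[OF that(2)]]] q_M that
    by (simp add: q_eq_iff semimodule_pl_closed[OF M])
  have q_act: "q (act r (q x)) = q (act r x)" if "r \<in> R" "x \<in> M" for r x
    using semimodule_congruence_act[OF E that(1) E_sym[OF E_q[OF that(2)]]] q_M that
    by (simp add: q_eq_iff semimodule_act_closed[OF M])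
  show "semimodule R add mul (q ` M) (\<lambda>u v. q (pl u v)) (\<lambda>r u. q (act r u))"
    unfolding semimodule_def
    using semimodule_nonempty[OF M] semimodule_pl_closed[OF M] semimodule_act_closed[OF M]
      semimodule_pl_assoc[OF M] semimodule_pl_comm[OF M] semimodule_act_mul[OF M]
      semimodule_act_add[OF M] semimodule_act_pl[OF M] q_pl q_act
      semiring_add_closed[OF R] semiring_mul_closed[OF R]
    by auto
qed

lemma semiring_opposite:
  assumes "semiring R add mul"
  shows "semiring R add (\<lambda>a b. mul b a)"
  unfolding semiring_def
  by (intro conjI ballI) (simp_all add: semiring_rules[OF assms], simp add: semiring_add_comm[OF assms])

lemma semiring_congruence_opposite:
  "semiring_congruence R add (\<lambda>a b. mul b a) E \<longleftrightarrow> semiring_congruence R add mul E"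
  unfolding semiring_congruence_def by blast

lemma simple_semiring_opposite:
  "simple_semiring R add mul \<Longrightarrow> simple_semiring R add (\<lambda>a b. mul b a)"
  unfolding simple_semiring_def using semiring_opposite semiring_congruence_opposite by blast

lemma prods_opposite: "prods R (\<lambda>a b. mul b a) = prods R mul"
  unfolding prods_def by blast

lemma semiring_congruence_left_mul_kernel:
  assumes R: "semiring R add mul" and r0: "r0 \<in> R"
    and absorb: "\<And>p u. p \<in> R \<Longrightarrow> u \<in> R \<Longrightarrow> mul r0 (mul p u) = mul r0 u"
  shows "semiring_congruence R add mul {(a, b). a \<in> R \<and> b \<in> R \<and> mul r0 a = mul r0 b}"
  unfolding semiring_congruence_def
proof (intro conjI allI impI)
  show "equiv R {(a, b). a \<in> R \<and> b \<in> R \<and> mul r0 a = mul r0 b}"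
    unfolding equiv_def refl_on_def sym_def trans_def by auto
next
  fix p q u v
  assume "(p, q) \<in> {(a, b). a \<in> R \<and> b \<in> R \<and> mul r0 a = mul r0 b}"
    and "(u, v) \<in> {(a, b). a \<in> R \<and> b \<in> R \<and> mul r0 a = mul r0 b}"
  then have in_R: "p \<in> R" "q \<in> R" "u \<in> R" "v \<in> R"
    and pq: "mul r0 p = mul r0 q" and uv: "mul r0 u = mul r0 v"
    by auto
  have "mul r0 (add p u) = mul r0 (add q v)"
    using semiring_distrib_left[OF R] r0 in_R pq uv by metis
  then show "(add p u, add q v) \<in> {(a, b). a \<in> R \<and> b \<in> R \<and> mul r0 a = mul r0 b}"
    using in_R semiring_add_closed[OF R] by blast
  have "mul r0 (mul p u) = mul r0 (mul q v)" using absorb in_R uv by metis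
  then show "(mul p u, mul q v) \<in> {(a, b). a \<in> R \<and> b \<in> R \<and> mul r0 a = mul r0 b}"
    using in_R semiring_mul_closed[OF R] by blast
qed

lemma idempotent_add_le_iff:
  assumes R: "semiring R add mul" and idem: "\<And>x. x \<in> R \<Longrightarrow> add x x = x"
    and in_R: "x \<in> R" "u \<in> R" "e \<in> R"
  shows "add (add x u) e = e \<longleftrightarrow> add x e = e \<and> add u e = e"
proof
  have le_if_le_sum: "add y e = e" if sum: "add y (add v e) = e" and "y \<in> R" "v \<in> R" for y v
  proof -
    have "add y e = add y (add y (add v e))" using sum by simp
    also have "\<dots> = add (add y y) (add v e)"
      using that in_R by (simp add: semiring_add_assoc[OF R] semiring_add_closed[OF R])
    also have "\<dots> = e" using that idem sum by simp
    finally show ?thesis .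
  qed
  assume "add (add x u) e = e"
  then have xue: "add x (add u e) = e" using in_R by (simp add: semiring_add_assoc[OF R])
  moreover have "add u (add x e) = e"
    using xue semiring_add_assoc[OF R, of u x e] semiring_add_assoc[OF R, of x u e]
      semiring_add_comm[OF R, of u x] in_R by metis
  ultimately show "add x e = e \<and> add u e = e" using le_if_le_sum in_R by blast
next
  assume "add x e = e \<and> add u e = e"
  then show "add (add x u) e = e" using in_R by (simp add: semiring_add_assoc[OF R])
qed

section \<open>Simple semirings with \<open>|RR| > 1\<close> and \<open>|R| > 2\<close>\<close>

locale nontrivial_simple_semiring =
  fixes R :: "'a set" and add mul :: "'a \<Rightarrow> 'a \<Rightarrow> 'a"
  assumes simple: "simple_semiring R add mul"
    and card_prods_gt_1: "card (prods R mul) > 1"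
    and card_gt_2: "card R > 2"
begin

lemma semiring: "semiring R add mul"
  using simple unfolding simple_semiring_def by blast

lemmas add_closed = semiring_add_closed[OF semiring]
  and mul_closed = semiring_mul_closed[OF semiring]

lemma congruence_cases: "semiring_congruence R add mul E \<Longrightarrow> E = Id_on R \<or> E = R \<times> R"
  using simple unfolding simple_semiring_def by blast

lemma finite_R: "finite R"
  using card_gt_2 card.infinite by fastforce

lemma three_elements:
  obtains a b c where "a \<in> R" "b \<in> R" "c \<in> R" "a \<noteq> b" "a \<noteq> c" "b \<noteq> c"
proof -
  have "Suc (Suc (Suc 0)) \<le> card R" using card_gt_2 by simp
  then show ?thesis using that by (auto simp: card_le_Suc_iff)
qed

lemma mul_not_constant:
  assumes "\<And>x y. x \<in> R \<Longrightarrow> y \<in> R \<Longrightarrow> mul x y = k"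
  shows False
proof -
  have "prods R mul \<subseteq> {k}" using assms unfolding prods_def by auto
  then have "card (prods R mul) \<le> 1" using card_mono[of "{k}"] by simp
  then show False using card_prods_gt_1 by simp
qed

lemma not_idempotent_right_projection:
  assumes idem: "\<And>x. x \<in> R \<Longrightarrow> add x x = x" and proj: "\<And>x y. x \<in> R \<Longrightarrow> y \<in> R \<Longrightarrow> mul x y = y"
  shows False
proof -
  obtain a b c where abc: "a \<in> R" "b \<in> R" "c \<in> R" "a \<noteq> b" "a \<noteq> c" "b \<noteq> c"
    by (rule three_elements)
  have below: "add x e = e" if e: "e \<in> R" and x: "x \<in> R" for e x
  proof -
    \<comment> \<open>Under a projection multiplication every additive equivalence is a congruence;
      this one has at most two classes, so simplicity forces it to be full.\<close>
    define Q where "Q = {(x, y). x \<in> R \<and> y \<in> R \<and> (add x e = e \<longleftrightarrow> add y e = e)}"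
    have "semiring_congruence R add mul Q"
      unfolding semiring_congruence_def
    proof (intro conjI allI impI)
      show "equiv R Q" unfolding Q_def equiv_def refl_on_def sym_def trans_def by auto
    next
      fix p q u v assume "(p, q) \<in> Q" "(u, v) \<in> Q"
      then show "(add p u, add q v) \<in> Q" and "(mul p u, mul q v) \<in> Q"
        using idempotent_add_le_iff[OF semiring idem] e proj add_closed unfolding Q_def by auto
    qed
    moreover have "Q \<noteq> Id_on R"
    proof
      assume "Q = Id_on R"
      then have "p = q" if "p \<in> R" "q \<in> R" "add p e = e \<longleftrightarrow> add q e = e" for p q
        using that unfolding Q_def by auto
      then show False using abc by metis
    qed
    ultimately have "(x, e) \<in> Q" using congruence_cases x e by blast
    then show ?thesis using idem e unfolding Q_def by auto
  qed
  have "a = add b a" using below abc by simp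
  also have "\<dots> = b" using below abc semiring_add_comm[OF semiring] by metis
  finally show False using abc by simp
qed

lemma mul_depends_on_left:
  "\<not> (\<forall>r\<in>R. \<forall>s\<in>R. \<forall>t\<in>R. mul r t = mul s t)"
proof
  assume left_const: "\<forall>r\<in>R. \<forall>s\<in>R. \<forall>t\<in>R. mul r t = mul s t"
  obtain r0 where r0: "r0 \<in> R" using semiring_nonempty[OF semiring] by blast
  have mul_r0: "mul x y = mul r0 y" if "x \<in> R" "y \<in> R" for x y
    using left_const that r0 by blast
  have r0_absorb: "mul r0 (mul p u) = mul r0 u" if "p \<in> R" "u \<in> R" for p u
    using semiring_mul_assoc[OF semiring, of r0 p u] mul_r0[of "mul r0 p" u] r0 that mul_closed
    by simp
  define K where "K = {(a, b). a \<in> R \<and> b \<in> R \<and> mul r0 a = mul r0 b}"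
  have "semiring_congruence R add mul K"
    unfolding K_def by (rule semiring_congruence_left_mul_kernel[OF semiring r0 r0_absorb])
  then consider "K = Id_on R" | "K = R \<times> R" using congruence_cases by blast
  then show False
  proof cases
    case 1
    have "(mul r0 y, y) \<in> K" if "y \<in> R" for y
      using that r0 mul_closed r0_absorb unfolding K_def by auto
    then have "mul r0 y = y" if "y \<in> R" for y
      using that 1 by (simp add: Id_on_iff)
    then have proj: "mul x y = y" if "x \<in> R" "y \<in> R" for x y
      using mul_r0[OF that] that by simp
    have "add z z = z" if "z \<in> R" for z
      using semiring_distrib_right[OF semiring, of z z z] proj[of "add z z" z] proj[of z z] that add_closed
      by simp
    then show False using not_idempotent_right_projection proj by blast
  next
    case 2
    then have "mul x y = mul r0 r0" if "x \<in> R" "y \<in> R" for x y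
      using that r0 mul_r0[of x y] unfolding K_def by auto
    then show False by (rule mul_not_constant)
  qed
qed

lemma mul_depends_on_right:
  "\<not> (\<forall>r\<in>R. \<forall>s\<in>R. \<forall>t\<in>R. mul t r = mul t s)"
proof -
  interpret opposite: nontrivial_simple_semiring R add "\<lambda>a b. mul b a"
  proof
    show "simple_semiring R add (\<lambda>a b. mul b a)" by (rule simple_semiring_opposite[OF simple])
    show "card (prods R (\<lambda>a b. mul b a)) > 1" using card_prods_gt_1 by (subst prods_opposite)
    show "card R > 2" by (rule card_gt_2)
  qed
  show ?thesis using opposite.mul_depends_on_left .
qed

lemma faithful_regular: "faithful R R mul"
proof -
  have "annihilator R R mul (Id_on R) \<noteq> R \<times> R"
    using mul_depends_on_left unfolding annihilator_def by auto
  moreover have "semiring_congruence R add mul (annihilator R R mul (Id_on R))"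
    using semiring_congruence_annihilator[OF semiring semimodule_regular[OF semiring]
        semimodule_congruence_Id_on[OF semimodule_regular[OF semiring]]] .
  ultimately have "annihilator R R mul (Id_on R) = Id_on R"
    using congruence_cases by blast
  then show ?thesis
    using faithful_iff_annihilator_Id_on[of R R mul] mul_closed by blast
qed

end

section \<open>Faithful semimodules of smallest cardinality\<close>

locale minimal_faithful_semimodule = nontrivial_simple_semiring R add mul
  for R :: "'a set" and add mul :: "'a \<Rightarrow> 'a \<Rightarrow> 'a" +
  fixes M :: "'m set" and pl :: "'m \<Rightarrow> 'm \<Rightarrow> 'm" and act :: "'a \<Rightarrow> 'm \<Rightarrow> 'm"
  assumes faithful_smallest: "faithful_smallest R add mul M pl act"
begin

lemma semimodule: "semimodule R add mul M pl act"
  and faithful: "faithful R M act"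
  using faithful_smallest unfolding faithful_smallest_def by blast+

lemmas pl_closed = semimodule_pl_closed[OF semimodule]
  and act_closed = semimodule_act_closed[OF semimodule]
  and act_mul = semimodule_act_mul[OF semimodule]
  and act_add = semimodule_act_add[OF semimodule]
  and act_pl = semimodule_act_pl[OF semimodule]

lemma faithfulD: "r \<in> R \<Longrightarrow> s \<in> R \<Longrightarrow> (\<And>x. x \<in> M \<Longrightarrow> act r x = act s x) \<Longrightarrow> r = s"
  using faithful unfolding faithful_def by blast

lemma embeds_into_faithful:
  fixes N :: "'m set"
  assumes "semimodule R add mul N plN actN" "faithful R N actN"
  obtains f where "inj_on f M" "f ` M \<subseteq> N"
proof -
  have "\<not> card_less N M"
    using faithful_smallest assms unfolding faithful_smallest_def by blast
  then show thesis using that unfolding card_less_def by blast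
qed

lemma finite_M: "finite M"
proof (rule ccontr)
  assume "infinite M"
  then obtain A where A: "finite A" "card A = card R" "A \<subseteq> M"
    using infinite_arbitrarily_large by blast
  then obtain g where g: "bij_betw g R A"
    using finite_same_card_bij finite_R by metis
  obtain f where "inj_on f M" "f ` M \<subseteq> A"
    using embeds_into_faithful semimodule_transfer[OF semiring g]
      faithful_transfer[OF semiring faithful_regular g] .
  then have "finite M" using A(1) finite_subset inj_on_finite by blast
  with \<open>infinite M\<close> show False by contradiction
qed

lemma card_le_faithful:
  fixes N :: "'m set"
  assumes "semimodule R add mul N plN actN" "faithful R N actN" "finite N"
  shows "card M \<le> card N"
  using embeds_into_faithful[OF assms(1,2)] card_inj_on_le assms(3) by metis

lemma annihilator_cases:
  assumes "semimodule_congruence R M pl act E"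
  shows "annihilator R M act E = Id_on R \<or> annihilator R M act E = R \<times> R"
  using congruence_cases semiring_congruence_annihilator[OF semiring semimodule assms] by blast

lemma congruence_Id_on_if_annihilator_Id_on:
  assumes E: "semimodule_congruence R M pl act E" and ann: "annihilator R M act E = Id_on R"
  shows "E = Id_on M"
proof -
  obtain q where q_M: "\<And>x. x \<in> M \<Longrightarrow> q x \<in> M" and E_q: "\<And>x. x \<in> M \<Longrightarrow> (x, q x) \<in> E"
    and q_eq_iff: "\<And>x y. x \<in> M \<Longrightarrow> y \<in> M \<Longrightarrow> q x = q y \<longleftrightarrow> (x, y) \<in> E"
    and quotient: "semimodule R add mul (q ` M) (\<lambda>u v. q (pl u v)) (\<lambda>r u. q (act r u))"
    using semimodule_quotient_representatives[OF semiring semimodule E] by blast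
  have "faithful R (q ` M) (\<lambda>r u. q (act r u))"
    unfolding faithful_def
  proof (intro ballI impI)
    fix r s assume rs: "r \<in> R" "s \<in> R" and eq: "\<forall>u\<in>q ` M. q (act r u) = q (act s u)"
    have q_act: "q (act t x) = q (act t (q x))" if "t \<in> R" "x \<in> M" for t x
      using semimodule_congruence_act[OF E that(1) E_q[OF that(2)]] q_eq_iff act_closed q_M that by simp
    have "(act r x, act s x) \<in> E" if x: "x \<in> M" for x
    proof -
      have "q (act r x) = q (act r (q x))" using q_act rs x by blast
      also have "\<dots> = q (act s (q x))" using eq x by blast
      also have "\<dots> = q (act s x)" using q_act rs x by simp
      finally show ?thesis using q_eq_iff rs x act_closed by simp
    qed
    then have "(r, s) \<in> annihilator R M act E" unfolding annihilator_def using rs by blast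
    then show "r = s" using ann by auto
  qed
  then have "card M \<le> card (q ` M)"
    using card_le_faithful[OF quotient] finite_M by blast
  then have "card (q ` M) = card M" using card_image_le[OF finite_M, of q] by simp
  then have "inj_on q M" by (rule eq_card_imp_inj_on[OF finite_M])
  moreover have "E \<subseteq> M \<times> M" "Id_on M \<subseteq> E"
    using E unfolding semimodule_congruence_def equiv_def refl_on_def by auto
  ultimately show ?thesis
    using q_eq_iff unfolding inj_on_def by auto
qed

lemma eq_if_act_eq:
  assumes "x \<in> M" "y \<in> M" "\<And>r. r \<in> R \<Longrightarrow> act r x = act r y"
  shows "x = y"
proof -
  define E where "E = {(x, y). x \<in> M \<and> y \<in> M \<and> (\<forall>r\<in>R. act r x = act r y)}"
  have E: "semimodule_congruence R M pl act E"
    unfolding semimodule_congruence_def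
  proof (intro conjI allI impI ballI)
    show "equiv M E" unfolding E_def equiv_def refl_on_def sym_def trans_def by auto
  next
    fix x y u v assume "(x, y) \<in> E" "(u, v) \<in> E"
    then show "(pl x u, pl y v) \<in> E" unfolding E_def using act_pl pl_closed by auto
  next
    fix r x y assume "r \<in> R" "(x, y) \<in> E"
    then show "(act r x, act r y) \<in> E" unfolding E_def using act_mul act_closed mul_closed by auto
  qed
  have "annihilator R M act E \<noteq> R \<times> R"
  proof
    assume full: "annihilator R M act E = R \<times> R"
    have "mul t r = mul t s" if "r \<in> R" "s \<in> R" "t \<in> R" for r s t
    proof (rule faithfulD)
      fix x assume x: "x \<in> M"
      have "(r, s) \<in> annihilator R M act E" using full that by blast
      then have "act t (act r x) = act t (act s x)"
        using x that unfolding annihilator_def E_def by blast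
      then show "act (mul t r) x = act (mul t s) x" using act_mul that x by simp
    qed (use that mul_closed in auto)
    then show False using mul_depends_on_right by blast
  qed
  then have "E = Id_on M"
    using annihilator_cases[OF E] congruence_Id_on_if_annihilator_Id_on[OF E] by blast
  moreover have "(x, y) \<in> E" unfolding E_def using assms by auto
  ultimately show ?thesis by auto
qed

lemma subsemimodule_eq_if_faithful:
  assumes S: "subsemimodule R M pl act S" "S \<noteq> {}" and "faithful R S act"
  shows "S = M"
proof -
  have "S \<subseteq> M" using S(1) unfolding subsemimodule_def by blast
  moreover have "card M \<le> card S"
    using card_le_faithful[OF semimodule_subsemimodule[OF semimodule S] assms(3)]
      finite_M \<open>S \<subseteq> M\<close> finite_subset by blast
  ultimately show ?thesis using card_subset_eq[OF finite_M] card_mono[OF finite_M] by (metis le_antisym)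
qed

lemma not_quasitrivial: "\<not> quasitrivial R M act"
proof
  assume "quasitrivial R M act"
  then have "r = s" if "r \<in> R" "s \<in> R" for r s
    using faithfulD that unfolding quasitrivial_def by blast
  moreover obtain a b where "a \<in> R" "b \<in> R" "a \<noteq> b" using three_elements by metis
  ultimately show False by blast
qed

lemma sub_irreducible: "sub_irreducible R M pl act"
  unfolding sub_irreducible_def
proof (intro conjI allI impI)
  show "\<not> quasitrivial R M act" by (rule not_quasitrivial)
next
  fix S assume "subsemimodule R M pl act S \<and> S \<noteq> M"
  then have S: "subsemimodule R M pl act S" and proper: "S \<noteq> M" by auto
  then have S_M: "S \<subseteq> M" and act_S: "\<And>r x. r \<in> R \<Longrightarrow> x \<in> S \<Longrightarrow> act r x \<in> S"
    unfolding subsemimodule_def by blast+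
  show "id_quasitrivial R S act"
  proof (cases "S = {}")
    case False
    have smS: "semimodule R add mul S pl act"
      by (rule semimodule_subsemimodule[OF semimodule S False])
    have "\<not> faithful R S act" using subsemimodule_eq_if_faithful[OF S False] proper by blast
    then have "annihilator R S act (Id_on S) \<noteq> Id_on R"
      by (simp add: faithful_iff_annihilator_Id_on[OF act_S])
    moreover have "semiring_congruence R add mul (annihilator R S act (Id_on S))"
      by (rule semiring_congruence_annihilator[OF semiring smS semimodule_congruence_Id_on[OF smS]])
    ultimately have "annihilator R S act (Id_on S) = R \<times> R"
      using congruence_cases by blast
    then have act_indep: "act r x = act s x" if "r \<in> R" "s \<in> R" "x \<in> S" for r s x
      using that unfolding annihilator_def by auto
    have "act r x = x" if "r \<in> R" "x \<in> S" for r x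
    proof (rule eq_if_act_eq)
      fix t assume t: "t \<in> R"
      have "act t (act r x) = act (mul t r) x" using act_mul t that S_M by blast
      also have "\<dots> = act t x" using act_indep mul_closed t that by blast
      finally show "act t (act r x) = act t x" .
    qed (use that S_M act_closed in auto)
    then show ?thesis unfolding id_quasitrivial_def by blast
  qed (simp add: id_quasitrivial_def)
qed

lemma action_image_related_if_annihilator_full:
  assumes E: "semimodule_congruence R M pl act E" and full: "annihilator R M act E = R \<times> R"
    and x: "x \<in> M" and r: "r \<in> R"
  shows "(x, act r x) \<in> E"
proof -
  have act_E: "(act r y, act s y) \<in> E" if "r \<in> R" "s \<in> R" "y \<in> M" for r s y
    using full that unfolding annihilator_def by auto
  define P where "P = {y \<in> M. \<forall>r\<in>R. (y, act r y) \<in> E}"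
  have act_P: "act r y \<in> P" if r: "r \<in> R" and y: "y \<in> M" for r y
  proof -
    have "(act r y, act s (act r y)) \<in> E" if "s \<in> R" for s
      using act_E[OF r mul_closed[OF that r] y] act_mul[OF that r y] by simp
    then show ?thesis unfolding P_def using act_closed[OF r y] by blast
  qed
  have "subsemimodule R M pl act P"
    unfolding subsemimodule_def
  proof (intro conjI ballI)
    fix y z assume "y \<in> P" "z \<in> P"
    then show "pl y z \<in> P"
      using semimodule_congruence_pl[OF E] act_pl pl_closed unfolding P_def by auto
  qed (use act_P in \<open>auto simp: P_def\<close>)
  have "P = M"
  proof (rule ccontr)
    assume "P \<noteq> M"
    then have P_fixed: "id_quasitrivial R P act"
      using sub_irreducible \<open>subsemimodule R M pl act P\<close> unfolding sub_irreducible_def by blast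
    have "mul s t = t" if "s \<in> R" "t \<in> R" for s t
    proof (rule faithfulD)
      fix y assume y: "y \<in> M"
      have "act (mul s t) y = act s (act t y)" using act_mul[OF that y] by simp
      also have "\<dots> = act t y" using P_fixed act_P[OF that(2) y] that(1) unfolding id_quasitrivial_def by blast
      finally show "act (mul s t) y = act t y" .
    qed (use that mul_closed in auto)
    then have "\<forall>r\<in>R. \<forall>s\<in>R. \<forall>t\<in>R. mul r t = mul s t" by simp
    then show False using mul_depends_on_left by contradiction
  qed
  then show ?thesis using x r unfolding P_def by blast
qed

lemma congruence_class_subsemimodule:
  assumes E: "semimodule_congruence R M pl act E" and full: "annihilator R M act E = R \<times> R"
    and x: "x \<in> M"
  shows "subsemimodule R M pl act {y. (x, y) \<in> E}"
proof -
  note E_sym = semimodule_congruence_sym[OF E] and E_trans = semimodule_congruence_trans[OF E]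
  obtain r where r: "r \<in> R" using semiring_nonempty[OF semiring] by blast
  have x_rx: "(x, act r x) \<in> E" if "r \<in> R" for r
    using action_image_related_if_annihilator_full[OF E full x that] .
  have "(pl x x, act (add r r) x) \<in> E"
    using semimodule_congruence_pl[OF E x_rx[OF r] x_rx[OF r]] act_add r x by simp
  then have x_xx: "(x, pl x x) \<in> E"
    using x_rx[OF add_closed[OF r r]] E_sym E_trans by blast
  show ?thesis
    unfolding subsemimodule_def
  proof (intro conjI ballI subsetI)
    fix y assume "y \<in> {y. (x, y) \<in> E}"
    then show "y \<in> M" using semimodule_congruence_carrier[OF E] by blast
  next
    fix y z assume "y \<in> {y. (x, y) \<in> E}" "z \<in> {y. (x, y) \<in> E}"
    then show "pl y z \<in> {y. (x, y) \<in> E}"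
      using semimodule_congruence_pl[OF E] x_xx E_trans by blast
  next
    fix s y assume s: "s \<in> R" and "y \<in> {y. (x, y) \<in> E}"
    then have "(x, y) \<in> E" by simp
    moreover have "(y, act s y) \<in> E"
      using action_image_related_if_annihilator_full[OF E full _ s] semimodule_congruence_carrier[OF E]
        \<open>(x, y) \<in> E\<close> by blast
    ultimately show "act s y \<in> {y. (x, y) \<in> E}" using E_trans by blast
  qed
qed

lemma quotient_irreducible: "quotient_irreducible R M pl act"
  unfolding quotient_irreducible_def
proof (intro conjI allI impI)
  show "\<not> quasitrivial R M act" by (rule not_quasitrivial)
next
  fix E assume E: "semimodule_congruence R M pl act E"
  show "E = Id_on M \<or> E = M \<times> M"
  proof (cases "annihilator R M act E = Id_on R")
    case True
    then show ?thesis using congruence_Id_on_if_annihilator_Id_on[OF E] by blast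
  next
    case False
    then have full: "annihilator R M act E = R \<times> R" using annihilator_cases[OF E] by blast
    show ?thesis
    proof (cases "\<exists>x\<in>M. {y. (x, y) \<in> E} = M")
      case True
      then obtain x where x: "x \<in> M" "{y. (x, y) \<in> E} = M" by blast
      have "(y, z) \<in> E" if "y \<in> M" "z \<in> M" for y z
        using x that semimodule_congruence_sym[OF E] semimodule_congruence_trans[OF E] by blast
      then have "E = M \<times> M" using semimodule_congruence_carrier[OF E] by auto
      then show ?thesis ..
    next
      case False
      have "act r x = x" if "r \<in> R" "x \<in> M" for r x
      proof -
        have "id_quasitrivial R {y. (x, y) \<in> E} act"
          using sub_irreducible congruence_class_subsemimodule[OF E full \<open>x \<in> M\<close>] False \<open>x \<in> M\<close>
          unfolding sub_irreducible_def by blast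
        moreover have "x \<in> {y. (x, y) \<in> E}" using semimodule_congruence_refl[OF E] \<open>x \<in> M\<close> by blast
        ultimately show ?thesis using \<open>r \<in> R\<close> unfolding id_quasitrivial_def by blast
      qed
      then have "quasitrivial R M act" unfolding quasitrivial_def by simp
      then show ?thesis using not_quasitrivial by contradiction
    qed
  qed
qed

end

theorem proposition2p14:
  fixes R :: "'a set" and add mul :: "'a \<Rightarrow> 'a \<Rightarrow> 'a"
    and M :: "'m set" and pl :: "'m \<Rightarrow> 'm \<Rightarrow> 'm" and act :: "'a \<Rightarrow> 'm \<Rightarrow> 'm"
  assumes "simple_semiring R add mul"
    and "finite R"
    and "card (prods R mul) > 1"
    and "card R > 2"
    and "faithful_smallest R add mul M pl act"
  shows "irreducible_semimodule R M pl act"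
proof -
  interpret minimal_faithful_semimodule R add mul M pl act
    using assms by unfold_locales
  show ?thesis
    unfolding irreducible_semimodule_def using sub_irreducible quotient_irreducible ..
qed

end
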